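(* Both forgetfulness and absent-mindedness can prevent the existence of a Nash equilibrium in behavioural policies. Precisely: (i) there exists a (generalised) MAID in which some agent is forgetful and no agent is absent-minded, and which has no Nash equilibrium in behavioural policies; (ii) there exists a (generalised) MAID in which some agent is absent-minded and no agent is forgetful, and which has no Nash equilibrium in behavioural policies.
   Context: A multi-agent influence diagram (MAID) consists of a finite set of agents $N=\{1,\dots,n\}$ and a directed acyclic graph (DAG) on a finite set of variables $\bm{V}$, partitioned into chance variables $\bm{X}$, decision variables $\bm{D}=\bigcup_{i\in N}\bm{D}^i$ and utility variables $\bm{U}=\bigcup_{i\in N}\bm{U}^i$ (the sets $\bm{D}^i$ are pairwise disjoint, as are the $\bm{U}^i$). Each variable $V$ has a finite domain $\mathrm{dom}(V)$ with at least two elements; $\mathrm{Pa}_V$ denotes its parents in the DAG and $\mathrm{pa}_V$ an instantiation of them. The MAID specifies for every non-decision variable $V$ a conditional probability distribution (CPD) $\Pr(V\mid \mathrm{Pa}_V)$; utility variables have deterministic CPDs, i.e. are real-valued functions of their parents. In a generalised MAID, each agent's decision set $\bm{D}^i$ is partitioned into groups; all decisions in one group have the same domain and their parent sets have the same joint domain, and they share one decision rule. A decision rule for a group $G$ is a CPD $\pi_G(D\mid \mathrm{Pa}_D)$ used at every $D\in G$, each such decision drawing independently from it; it is pure if all its probabilities are in $\{0,1\}$. A (behavioural) policy $\bm{\pi}^i$ of agent $i$ assigns a decision rule to each group of $\bm{D}^i$; a policy profile is $\bm{\pi}=(\bm{\pi}^1,\dots,\bm{\pi}^n)$ and $\bm{\pi}^{-i}$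 denotes the policies of the agents other than $i$. The profile induces the joint distribution $\Pr^{\bm\pi}(\bm v)=\prod_{V\in\bm V\setminus\bm D}\Pr(v\mid \mathrm{pa}_V)\prod_{D\in\bm D}\pi_{G(D)}(d\mid \mathrm{pa}_D)$, where $G(D)$ is the group of $D$, and agent $i$'s expected utility is $EU^i(\bm\pi)=\sum_{U\in\bm U^i}\sum_{u}\Pr^{\bm\pi}(U=u)\,u$. A profile $\bm\pi$ is a Nash equilibrium in behavioural policies if for every agent $i$ and every behavioural policy $\bm\varpi^i$, $EU^i(\bm\pi^{-i},\bm\pi^i)\ge EU^i(\bm\pi^{-i},\bm\varpi^i)$. Agent $i$ has imperfect recall if for every total ordering $D_1\prec\dots\prec D_m$ of $\bm D^i$ there are $j<k$ with $\mathrm{Pa}_{D_j}\cup\{D_j\}\not\subseteq \mathrm{Pa}_{D_k}$; agent $i$ is forgetful if such a pair $D_j,D_k$ have distinct decision rules (lie in different groups); agent $i$ is absent-minded if some group of its decisions contains more than one decision. *)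

theory Defs
  imports Complex_Main "HOL-Library.FuncSet"
begin

text \<open>Variables are natural numbers,
  values are reals (so that utility variables carry their real utility as value).
  The parents of a variable are given as a duplicate-free list; the list order
  identifies parents across the decisions of one group (so that "same joint
  domain of the parent sets" can be expressed).  Decisions are grouped by the
  label grp; a decision rule is attached to each group label.\<close>

record maid =
  agents :: "nat set"
  vars   :: "nat set"
  chance :: "nat set"
  decs   :: "nat set"
  utils  :: "nat set"
  dmn    :: "nat \<Rightarrow> real set"
  par    :: "nat \<Rightarrow> nat list"
  cpd    :: "nat \<Rightarrow> real list \<Rightarrow> real \<Rightarrow> real"
  dagent :: "nat \<Rightarrow> nat"
  uagent :: "nat \<Rightarrow> nat"
  grp    :: "nat \<Rightarrow> nat"

definition is_dist :: "real set \<Rightarrow> (real \<Rightarrow> real) \<Rightarrow> bool" where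
  "is_dist S f \<longleftrightarrow> (\<forall>x\<in>S. 0 \<le> f x) \<and> (\<Sum>x\<in>S. f x) = 1"

definition pinst :: "maid \<Rightarrow> nat \<Rightarrow> real list set" where
  "pinst M v = listset (map (dmn M) (par M v))"

definition edges :: "maid \<Rightarrow> (nat \<times> nat) set" where
  "edges M = {(p, v). v \<in> vars M \<and> p \<in> set (par M v)}"

definition wf_maid :: "maid \<Rightarrow> bool" where
  "wf_maid M \<longleftrightarrow>
     finite (agents M) \<and> finite (vars M) \<and>
     chance M \<union> decs M \<union> utils M = vars M \<and>
     chance M \<inter> decs M = {} \<and> chance M \<inter> utils M = {} \<and> decs M \<inter> utils M = {} \<and>
     (\<forall>v\<in>vars M. finite (dmn M v) \<and> 2 \<le> card (dmn M v)) \<and>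
     (\<forall>v\<in>vars M. distinct (par M v) \<and> set (par M v) \<subseteq> vars M) \<and>
     acyclic (edges M) \<and>
     (\<forall>d\<in>decs M. dagent M d \<in> agents M) \<and>
     (\<forall>u\<in>utils M. uagent M u \<in> agents M) \<and>
     (\<forall>v\<in>vars M - decs M. \<forall>p\<in>pinst M v. is_dist (dmn M v) (cpd M v p)) \<and>
     (\<forall>u\<in>utils M. \<forall>p\<in>pinst M u. \<forall>x. cpd M u p x \<in> {0, 1}) \<and>
     (\<forall>d\<in>decs M. \<forall>d'\<in>decs M. grp M d = grp M d' \<longrightarrow>
        dagent M d = dagent M d' \<and> dmn M d = dmn M d' \<and>
        length (par M d) = length (par M d') \<and>
        (\<forall>k<length (par M d). dmn M (par M d ! k) = dmn M (par M d' ! k)))"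

text \<open>A (behavioural) policy profile assigns to every group label a decision rule.\<close>
type_synonym profile = "nat \<Rightarrow> real list \<Rightarrow> real \<Rightarrow> real"

definition valid_profile :: "maid \<Rightarrow> profile \<Rightarrow> bool" where
  "valid_profile M \<pi> \<longleftrightarrow>
     (\<forall>d\<in>decs M. \<forall>p\<in>pinst M d. is_dist (dmn M d) (\<pi> (grp M d) p))"

definition asgs :: "maid \<Rightarrow> (nat \<Rightarrow> real) set" where
  "asgs M = PiE (vars M) (dmn M)"

definition jprob :: "maid \<Rightarrow> profile \<Rightarrow> (nat \<Rightarrow> real) \<Rightarrow> real" where
  "jprob M \<pi> a = (\<Prod>v\<in>vars M.
      if v \<in> decs M then \<pi> (grp M v) (map a (par M v)) (a v)
      else cpd M v (map a (par M v)) (a v))"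

definition margprob :: "maid \<Rightarrow> profile \<Rightarrow> nat \<Rightarrow> real \<Rightarrow> real" where
  "margprob M \<pi> V x = (\<Sum>a\<in>{a\<in>asgs M. a V = x}. jprob M \<pi> a)"

definition EU :: "maid \<Rightarrow> profile \<Rightarrow> nat \<Rightarrow> real" where
  "EU M \<pi> i = (\<Sum>U\<in>{U\<in>utils M. uagent M U = i}. \<Sum>u\<in>dmn M U. margprob M \<pi> U u * u)"

definition decs_of :: "maid \<Rightarrow> nat \<Rightarrow> nat set" where
  "decs_of M i = {d\<in>decs M. dagent M d = i}"

definition groups_of :: "maid \<Rightarrow> nat \<Rightarrow> nat set" where
  "groups_of M i = grp M ` decs_of M i"

definition nash :: "maid \<Rightarrow> profile \<Rightarrow> bool" where
  "nash M \<pi> \<longleftrightarrow> valid_profile M \<pi> \<and>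
     (\<forall>i\<in>agents M. \<forall>\<pi>'. valid_profile M \<pi>' \<and> (\<forall>g. g \<notin> groups_of M i \<longrightarrow> \<pi>' g = \<pi> g)
        \<longrightarrow> EU M \<pi>' i \<le> EU M \<pi> i)"

definition recall_violation :: "maid \<Rightarrow> nat \<Rightarrow> nat \<Rightarrow> bool" where
  "recall_violation M d d' \<longleftrightarrow> \<not> (set (par M d) \<union> {d} \<subseteq> set (par M d'))"

definition imperfect_recall :: "maid \<Rightarrow> nat \<Rightarrow> bool" where
  "imperfect_recall M i \<longleftrightarrow>
     (\<forall>xs. distinct xs \<and> set xs = decs_of M i \<longrightarrow>
        (\<exists>j k. j < k \<and> k < length xs \<and> recall_violation M (xs ! j) (xs ! k)))"

definition forgetful :: "maid \<Rightarrow> nat \<Rightarrow> bool" where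
  "forgetful M i \<longleftrightarrow>
     (\<forall>xs. distinct xs \<and> set xs = decs_of M i \<longrightarrow>
        (\<exists>j k. j < k \<and> k < length xs \<and> recall_violation M (xs ! j) (xs ! k) \<and>
               grp M (xs ! j) \<noteq> grp M (xs ! k)))"

definition absent_minded :: "maid \<Rightarrow> nat \<Rightarrow> bool" where
  "absent_minded M i \<longleftrightarrow>
     (\<exists>d\<in>decs_of M i. \<exists>d'\<in>decs_of M i. d \<noteq> d' \<and> grp M d = grp M d')"

end

theory Submission
  imports Defs
begin

text \<open>Agent 1 owns two decisions \<open>d\<^sub>0, d\<^sub>1\<close> that observe nothing, agent 2 owns one
  decision \<open>d\<^sub>2\<close>.  Agent 1 is paid 2 if \<open>d\<^sub>0 = d\<^sub>1\<close> and 1 if \<open>d\<^sub>0 = d\<^sub>2\<close>; agent 2 is paid 1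
  if \<open>d\<^sub>0 \<noteq> d\<^sub>2\<close>.  Behavioural policies make \<open>d\<^sub>0\<close> and \<open>d\<^sub>1\<close> independent, whether they follow two
  rules (agent 1 is forgetful) or one shared rule (agent 1 is absent-minded).  If \<open>d\<^sub>0\<close> is biased,
  agent 2's best response is pure, and agent 1 then gains by playing the pure pair
  \<open>d\<^sub>0 = d\<^sub>1 = d\<^sub>2\<close>, worth 3; if \<open>d\<^sub>0\<close> is uniform, agent 1 earns only 3/2, while any pure pair
  \<open>d\<^sub>0 = d\<^sub>1\<close> earns at least 2.\<close>

lemma sum_PiE_insert:
  assumes "x \<notin> S"
  shows "(\<Sum>f\<in>PiE (insert x S) T. g f) = (\<Sum>y\<in>T x. \<Sum>f\<in>PiE S T. g (f(x := y)))"
proof -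
  have "(\<Sum>f\<in>PiE (insert x S) T. g f) = (\<Sum>(y, f)\<in>T x \<times> PiE S T. g (f(x := y)))"
    unfolding PiE_insert_eq
    by (subst sum.reindex[OF inj_combinator[OF assms]]) (simp add: comp_def split_def)
  then show ?thesis
    by (simp add: sum.cartesian_product)
qed

lemma EU_eq_sum_asgs:
  assumes "wf_maid M"
  shows "EU M \<pi> i = (\<Sum>a\<in>asgs M. (\<Sum>U\<in>{U\<in>utils M. uagent M U = i}. a U) * jprob M \<pi> a)"
proof -
  have vars: "finite (vars M)" "utils M \<subseteq> vars M" "\<forall>v\<in>vars M. finite (dmn M v)"
    using assms unfolding wf_maid_def by auto
  then have fin: "finite (asgs M)"
    by (auto simp: asgs_def intro!: finite_PiE)
  have "(\<Sum>u\<in>dmn M U. margprob M \<pi> U u * u) = (\<Sum>a\<in>asgs M. a U * jprob M \<pi> a)"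
    if "U \<in> utils M" for U
  proof -
    have "(\<Sum>u\<in>dmn M U. margprob M \<pi> U u * u)
        = (\<Sum>u\<in>dmn M U. \<Sum>a\<in>{a\<in>asgs M. a U = u}. a U * jprob M \<pi> a)"
      unfolding margprob_def sum_distrib_right by (auto intro!: sum.cong)
    also have "\<dots> = (\<Sum>a\<in>asgs M. a U * jprob M \<pi> a)"
      using vars that fin by (intro sum.group) (auto simp: asgs_def)
    finally show ?thesis .
  qed
  then have "EU M \<pi> i = (\<Sum>U\<in>{U\<in>utils M. uagent M U = i}. \<Sum>a\<in>asgs M. a U * jprob M \<pi> a)"
    unfolding EU_def by simp
  also have "\<dots> = (\<Sum>a\<in>asgs M. (\<Sum>U\<in>{U\<in>utils M. uagent M U = i}. a U) * jprob M \<pi> a)"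
    unfolding sum_distrib_right by (rule sum.swap)
  finally show ?thesis .
qed

definition pure_rule :: "real \<Rightarrow> real list \<Rightarrow> real \<Rightarrow> real" where
  "pure_rule x = (\<lambda>_ y. if y = x then 1 else 0)"

lemma is_dist_pure_rule: "finite S \<Longrightarrow> x \<in> S \<Longrightarrow> is_dist S (pure_rule x p)"
  by (simp add: is_dist_def pure_rule_def)

lemma forgetful_imp_distinct_groups:
  assumes "wf_maid M" "forgetful M i"
  shows "\<exists>d\<in>decs_of M i. \<exists>d'\<in>decs_of M i. grp M d \<noteq> grp M d'"
proof -
  have "finite (vars M)" "decs M \<subseteq> vars M"
    using assms(1) unfolding wf_maid_def by auto
  then have "finite (decs_of M i)"
    unfolding decs_of_def by (auto intro: finite_subset)
  then obtain xs where xs: "distinct xs" "set xs = decs_of M i"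
    using finite_distinct_list by blast
  with assms(2) obtain j k where "j < k" "k < length xs" "grp M (xs ! j) \<noteq> grp M (xs ! k)"
    unfolding forgetful_def by blast
  then show ?thesis
    using xs(2) nth_mem[of j xs] nth_mem[of k xs] by auto
qed

lemma forgetfulI:
  assumes "d \<in> decs_of M i" "d' \<in> decs_of M i" "d \<noteq> d'"
    and "\<And>d d'. d \<in> decs_of M i \<Longrightarrow> d' \<in> decs_of M i \<Longrightarrow> d \<noteq> d' \<Longrightarrow>
           recall_violation M d d' \<and> grp M d \<noteq> grp M d'"
  shows "forgetful M i"
  unfolding forgetful_def
proof (intro allI impI)
  fix xs assume xs: "distinct xs \<and> set xs = decs_of M i"
  have "2 = card {d, d'}"
    using assms(3) by simp
  also have "\<dots> \<le> card (set xs)"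
    using xs assms(1,2) by (intro card_mono[OF finite_set]) auto
  also have "\<dots> = length xs"
    using xs distinct_card by blast
  finally have len: "2 \<le> length xs" .
  then have pos: "0 < length xs" "1 < length xs"
    by linarith+
  then have "xs ! 0 \<noteq> xs ! 1"
    using xs nth_eq_iff_index_eq[of xs 0 1] by linarith
  moreover have "xs ! 0 \<in> decs_of M i" "xs ! 1 \<in> decs_of M i"
    using xs nth_mem[OF pos(1)] nth_mem[OF pos(2)] by simp_all
  ultimately show "\<exists>j k. j < k \<and> k < length xs \<and> recall_violation M (xs ! j) (xs ! k) \<and>
                     grp M (xs ! j) \<noteq> grp M (xs ! k)"
    using assms(4) len by (intro exI[of _ 0] exI[of _ 1]) simp
qed

lemma nash_deviation:
  assumes "nash M \<pi>" "i \<in> agents M" "valid_profile M \<pi>'"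
    and "\<And>h. h \<notin> groups_of M i \<Longrightarrow> \<pi>' h = \<pi> h"
  shows "EU M \<pi>' i \<le> EU M \<pi> i"
  using assms unfolding nash_def by blast

lemma is_dist_doubleton:
  "a \<noteq> b \<Longrightarrow> is_dist {a, b} f \<longleftrightarrow> 0 \<le> f a \<and> 0 \<le> f b \<and> f a + f b = 1"
  by (auto simp: is_dist_def)

definition agree_payoff :: "real list \<Rightarrow> real" where
  "agree_payoff xs = (if xs ! 0 = xs ! 1 then 2 else 0) + (if xs ! 0 = xs ! 2 then 1 else 0)"

definition mismatch_payoff :: "real list \<Rightarrow> real" where
  "mismatch_payoff xs = (if xs ! 0 = xs ! 1 then 0 else 1)"

text \<open>Variables 0 and 1 are the decisions of agent 1, variable 2 that of agent 2, and 3 and 4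
  are the utility variables of agents 1 and 2.  Decision 1 uses the rule of group \<open>g\<close>:
  for \<open>g = 0\<close> it shares the rule of decision 0, for \<open>g = 1\<close> it has its own.\<close>

definition pennies_maid :: "nat \<Rightarrow> maid" where
  "pennies_maid g = \<lparr>agents = {1, 2}, vars = {0, 1, 2, 3, 4}, chance = {}, decs = {0, 1, 2},
     utils = {3, 4},
     dmn = (\<lambda>v. if v = 3 then {0, 1, 2, 3} else {0, 1}),
     par = (\<lambda>v. if v = 3 then [0, 1, 2] else if v = 4 then [0, 2] else []),
     cpd = (\<lambda>v p x. if x = (if v = 3 then agree_payoff p else mismatch_payoff p) then 1 else 0),
     dagent = (\<lambda>v. if v = 2 then 2 else 1),
     uagent = (\<lambda>v. if v = 4 then 2 else 1),
     grp = (\<lambda>v. if v = 1 then g else v)\<rparr>"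

lemma pennies_maid_simps [simp]:
  "agents (pennies_maid g) = {1, 2}"
  "vars (pennies_maid g) = {0, 1, 2, 3, 4}"
  "chance (pennies_maid g) = {}"
  "decs (pennies_maid g) = {0, 1, 2}"
  "utils (pennies_maid g) = {3, 4}"
  "dmn (pennies_maid g) = (\<lambda>v. if v = 3 then {0, 1, 2, 3} else {0, 1})"
  "par (pennies_maid g) = (\<lambda>v. if v = 3 then [0, 1, 2] else if v = 4 then [0, 2] else [])"
  "cpd (pennies_maid g) =
     (\<lambda>v p x. if x = (if v = 3 then agree_payoff p else mismatch_payoff p) then 1 else 0)"
  "dagent (pennies_maid g) = (\<lambda>v. if v = 2 then 2 else 1)"
  "uagent (pennies_maid g) = (\<lambda>v. if v = 4 then 2 else 1)"
  "grp (pennies_maid g) = (\<lambda>v. if v = 1 then g else v)"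
  by (simp_all add: pennies_maid_def)

lemma wf_pennies_maid: "g \<le> 1 \<Longrightarrow> wf_maid (pennies_maid g)"
proof -
  assume "g \<le> 1"
  moreover have "acyclic (edges (pennies_maid g))"
    by (rule acyclicI_order[where f = "\<lambda>v::nat. 4 - v"]) (auto simp: edges_def split: if_splits)
  ultimately show ?thesis
    unfolding wf_maid_def
    by (auto simp: pinst_def set_Cons_def is_dist_def agree_payoff_def mismatch_payoff_def)
qed

lemma decs_of_pennies_maid:
  "decs_of (pennies_maid g) i = (if i = 1 then {0, 1} else if i = 2 then {2} else {})"
  by (auto simp: decs_of_def)

lemma groups_of_pennies_maid:
  "groups_of (pennies_maid g) i = (if i = 1 then {0, g} else if i = 2 then {2} else {})"
  by (auto simp: groups_of_def decs_of_pennies_maid)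

lemma valid_profile_pennies_maid:
  "valid_profile (pennies_maid g) \<sigma> \<longleftrightarrow>
     is_dist {0, 1} (\<sigma> 0 []) \<and> is_dist {0, 1} (\<sigma> g []) \<and> is_dist {0, 1} (\<sigma> 2 [])"
  by (simp add: valid_profile_def pinst_def)

lemma jprob_pennies_maid:
  "jprob (pennies_maid g) \<pi> a = \<pi> 0 [] (a 0) * \<pi> g [] (a 1) * \<pi> 2 [] (a 2)
     * (if a 3 = agree_payoff [a 0, a 1, a 2] then 1 else 0)
     * (if a 4 = mismatch_payoff [a 0, a 2] then 1 else 0)"
  by (simp add: jprob_def)

lemma sum_asgs_pennies_maid:
  "(\<Sum>a\<in>asgs (pennies_maid g). h (a 0) (a 1) (a 2) (a 3) (a 4) * jprob (pennies_maid g) \<pi> a)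
   = (\<Sum>y0\<in>{0, 1}. \<Sum>y1\<in>{0, 1}. \<Sum>y2\<in>{0, 1}. \<pi> 0 [] y0 * \<pi> g [] y1 * \<pi> 2 [] y2
        * h y0 y1 y2 (agree_payoff [y0, y1, y2]) (mismatch_payoff [y0, y2]))"
  by (simp add: asgs_def jprob_pennies_maid sum_PiE_insert agree_payoff_def mismatch_payoff_def)

lemma EU_pennies_maid:
  assumes "g \<le> 1" "valid_profile (pennies_maid g) \<pi>"
  defines "p \<equiv> \<pi> 0 [] 1" and "r \<equiv> \<pi> g [] 1" and "q \<equiv> \<pi> 2 [] 1"
  shows "EU (pennies_maid g) \<pi> 1 = 2 * (p * r + (1 - p) * (1 - r)) + (p * q + (1 - p) * (1 - q))"
      (is "_ = ?EU1")
    and "EU (pennies_maid g) \<pi> 2 = p * (1 - q) + (1 - p) * q" (is "_ = ?EU2")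
proof -
  have zero: "\<pi> 0 [] 0 = 1 - p" "\<pi> g [] 0 = 1 - r" "\<pi> 2 [] 0 = 1 - q"
    using assms(2)
    unfolding p_def q_def r_def valid_profile_pennies_maid is_dist_doubleton[OF zero_neq_one]
    by linarith+
  have agents: "{U \<in> utils (pennies_maid g). uagent (pennies_maid g) U = 1} = {3}"
    "{U \<in> utils (pennies_maid g). uagent (pennies_maid g) U = 2} = {4}"
    by auto
  have wf: "wf_maid (pennies_maid g)"
    using assms(1) by (rule wf_pennies_maid)
  have "EU (pennies_maid g) \<pi> 1 = (\<Sum>a\<in>asgs (pennies_maid g). a 3 * jprob (pennies_maid g) \<pi> a)"
    unfolding EU_eq_sum_asgs[OF wf] agents by simp
  also have "\<dots> = (\<Sum>y0\<in>{0, 1}. \<Sum>y1\<in>{0, 1}. \<Sum>y2\<in>{0, 1}.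
      \<pi> 0 [] y0 * \<pi> g [] y1 * \<pi> 2 [] y2 * agree_payoff [y0, y1, y2])"
    using sum_asgs_pennies_maid[of "\<lambda>_ _ _ u _. u" g \<pi>] by simp
  also have "\<dots> = ?EU1"
    by (simp add: agree_payoff_def zero flip: p_def q_def r_def) (simp add: algebra_simps)
  finally show "EU (pennies_maid g) \<pi> 1 = ?EU1" .
  have "EU (pennies_maid g) \<pi> 2 = (\<Sum>a\<in>asgs (pennies_maid g). a 4 * jprob (pennies_maid g) \<pi> a)"
    unfolding EU_eq_sum_asgs[OF wf] agents by simp
  also have "\<dots> = (\<Sum>y0\<in>{0, 1}. \<Sum>y1\<in>{0, 1}. \<Sum>y2\<in>{0, 1}.
      \<pi> 0 [] y0 * \<pi> g [] y1 * \<pi> 2 [] y2 * mismatch_payoff [y0, y2])"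
    using sum_asgs_pennies_maid[of "\<lambda>_ _ _ _ u. u" g \<pi>] by simp
  also have "\<dots> = ?EU2"
    by (simp add: mismatch_payoff_def zero flip: p_def q_def r_def) (simp add: algebra_simps)
  finally show "EU (pennies_maid g) \<pi> 2 = ?EU2" .
qed

lemma pennies_no_mutual_best_response:
  fixes p q r :: real
  assumes "0 \<le> p" "p \<le> 1" "0 \<le> q" "q \<le> 1" "0 \<le> r" "r \<le> 1"
    and "max (2 + q) (3 - q) \<le> 2 * (p * r + (1 - p) * (1 - r)) + (p * q + (1 - p) * (1 - q))"
    and "max p (1 - p) \<le> p * (1 - q) + (1 - p) * q"
  shows False
proof -
  have agent1: "2 + q \<le> 2 * (p * r + (1 - p) * (1 - r)) + (p * q + (1 - p) * (1 - q))"
      "3 - q \<le> 2 * (p * r + (1 - p) * (1 - r)) + (p * q + (1 - p) * (1 - q))"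
    using assms(7) by auto
  have agent2: "0 \<le> q * (1 - 2 * p)" "0 \<le> (1 - q) * (2 * p - 1)"
    using assms(8) by (auto simp: algebra_simps)
  have "p * r + (1 - p) * (1 - r) \<le> 1"
    using assms mult_right_mono[of p 1 r] mult_right_mono[of "1 - p" 1 "1 - r"] by simp
  then have coordination: "2 * (p * r + (1 - p) * (1 - r)) + (p * q + (1 - p) * (1 - q))
      \<le> 3 - p - q + 2 * p * q"
    by (simp add: algebra_simps)
  consider "1 / 2 < p" | "p < 1 / 2" | "p = 1 / 2"
    by linarith
  then show False
  proof cases
    case 1
    then have "q = 0"
      using agent2(1) assms(3) by (simp add: zero_le_mult_iff)
    then show False
      using agent1(2) coordination 1 by simp
  next
    case 2
    then have "q = 1"
      using agent2(2) assms(4) by (simp add: zero_le_mult_iff)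
    then show False
      using agent1(1) coordination 2 by simp
  next
    case 3
    then have "2 * (p * r + (1 - p) * (1 - r)) + (p * q + (1 - p) * (1 - q)) = 3 / 2"
      unfolding 3 by (simp add: field_simps)
    then show False
      using agent1(1) assms(3) by linarith
  qed
qed

lemma pennies_maid_no_nash:
  assumes "g \<le> 1"
  shows "\<not> nash (pennies_maid g) \<pi>"
proof
  assume nash: "nash (pennies_maid g) \<pi>"
  then have valid: "valid_profile (pennies_maid g) \<pi>"
    by (simp add: nash_def)
  have g: "g \<noteq> 2"
    using assms by simp
  define p q r where "p = \<pi> 0 [] 1" and "q = \<pi> 2 [] 1" and "r = \<pi> g [] 1"
  have bounds: "0 \<le> p" "p \<le> 1" "0 \<le> q" "q \<le> 1" "0 \<le> r" "r \<le> 1"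
    using valid
    unfolding p_def q_def r_def valid_profile_pennies_maid is_dist_doubleton[OF zero_neq_one]
    by linarith+
  have pure: "is_dist {0, 1} (pure_rule x [])" if "x \<in> {0, 1}" for x
    using that by (intro is_dist_pure_rule) auto
  have agent1: "2 + (x * q + (1 - x) * (1 - q))
      \<le> 2 * (p * r + (1 - p) * (1 - r)) + (p * q + (1 - p) * (1 - q))" if "x \<in> {0, 1}" for x
  proof -
    let ?\<sigma> = "\<lambda>h. if h \<in> {0, g} then pure_rule x else \<pi> h"
    have valid_\<sigma>: "valid_profile (pennies_maid g) ?\<sigma>"
      using valid pure[OF that] g by (simp add: valid_profile_pennies_maid)
    have "EU (pennies_maid g) ?\<sigma> 1 \<le> EU (pennies_maid g) \<pi> 1"
      using valid_\<sigma> by (intro nash_deviation[OF nash]) (simp_all add: groups_of_pennies_maid)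
    then show ?thesis
      using EU_pennies_maid(1)[OF assms valid_\<sigma>] EU_pennies_maid(1)[OF assms valid] that g
      by (auto simp: pure_rule_def p_def q_def r_def)
  qed
  have agent2: "p * (1 - x) + (1 - p) * x \<le> p * (1 - q) + (1 - p) * q" if "x \<in> {0, 1}" for x
  proof -
    let ?\<sigma> = "\<pi>(2 := pure_rule x)"
    have valid_\<sigma>: "valid_profile (pennies_maid g) ?\<sigma>"
      using valid pure[OF that] g by (simp add: valid_profile_pennies_maid)
    have "EU (pennies_maid g) ?\<sigma> 2 \<le> EU (pennies_maid g) \<pi> 2"
      using valid_\<sigma> by (intro nash_deviation[OF nash]) (simp_all add: groups_of_pennies_maid)
    then show ?thesis
      using EU_pennies_maid(2)[OF assms valid_\<sigma>] EU_pennies_maid(2)[OF assms valid] that g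
      by (auto simp: pure_rule_def p_def q_def)
  qed
  have "max (2 + q) (3 - q) \<le> 2 * (p * r + (1 - p) * (1 - r)) + (p * q + (1 - p) * (1 - q))"
    using agent1[of 1] agent1[of 0] by simp
  moreover have "max p (1 - p) \<le> p * (1 - q) + (1 - p) * q"
    using agent2[of 1] agent2[of 0] by simp
  ultimately show False
    by (rule pennies_no_mutual_best_response[OF bounds])
qed

lemma forgetful_pennies_maid: "forgetful (pennies_maid 1) 1"
  by (rule forgetfulI[of 0 _ _ 1]) (auto simp: decs_of_pennies_maid recall_violation_def)

lemma not_absent_minded_pennies_maid: "\<not> absent_minded (pennies_maid 1) i"
  by (auto simp: absent_minded_def decs_of_pennies_maid)

lemma absent_minded_pennies_maid: "absent_minded (pennies_maid 0) 1"
  by (auto simp: absent_minded_def decs_of_pennies_maid)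

lemma not_forgetful_pennies_maid: "\<not> forgetful (pennies_maid 0) i"
  using forgetful_imp_distinct_groups[OF wf_pennies_maid, of 0 i]
  by (auto simp: decs_of_pennies_maid split: if_splits)

theorem proposition1:
  shows "(\<exists>M. wf_maid M \<and> (\<exists>i\<in>agents M. forgetful M i) \<and>
              (\<forall>i\<in>agents M. \<not> absent_minded M i) \<and> \<not> (\<exists>\<pi>. nash M \<pi>))
       \<and> (\<exists>M. wf_maid M \<and> (\<exists>i\<in>agents M. absent_minded M i) \<and>
              (\<forall>i\<in>agents M. \<not> forgetful M i) \<and> \<not> (\<exists>\<pi>. nash M \<pi>))"
proof
  show "\<exists>M. wf_maid M \<and> (\<exists>i\<in>agents M. forgetful M i) \<and>
          (\<forall>i\<in>agents M. \<not> absent_minded M i) \<and> \<not> (\<exists>\<pi>. nash M \<pi>)"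
    using wf_pennies_maid[of 1] forgetful_pennies_maid not_absent_minded_pennies_maid
      pennies_maid_no_nash[of 1]
    by (intro exI[of _ "pennies_maid 1"]) auto
  show "\<exists>M. wf_maid M \<and> (\<exists>i\<in>agents M. absent_minded M i) \<and>
          (\<forall>i\<in>agents M. \<not> forgetful M i) \<and> \<not> (\<exists>\<pi>. nash M \<pi>)"
    using wf_pennies_maid[of 0] absent_minded_pennies_maid not_forgetful_pennies_maid
      pennies_maid_no_nash[of 0]
    by (intro exI[of _ "pennies_maid 0"]) auto
qed

end
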